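(* Let $\mathcal H=(M,n,\mathcal R)$ be a BMS. Then for every vector $v\in\mathbb R^n$ there is a mode $m\in M$ with $v\cdot r\ge 0$ for all $r\in\mathcal R(m)$ if and only if $\mathcal H$ is safe.
   Context: A multi-mode system is a tuple $\mathcal H=(M,n,\mathcal R)$ with $M$ a finite nonempty set of modes, $n\ge1$ variables, and $\mathcal R:M\to 2^{\mathbb R^n}$ giving nonempty rate sets; it is a BMS if each $\mathcal R(m)$ is a bounded convex polytope, and a CMS (constant-rate) if each $\mathcal R(m)$ is a singleton. An instance of a multi-mode system $(M,n,\mathcal R)$ is a CMS $(M,n,R)$ with $R(m)\in\mathcal R(m)$ for every $m$ (writing $R(m)$ for the single rate). A CMS $(M,n,R)$ is safe if there are $t_m\ge0$ ($m\in M$) with $\sum_{m\in M}t_m=1$ and $\sum_{m\in M}t_m R(m)=\vec 0$. The extreme-rate system $\mathrm{Ext}(\mathcal H)$ of a BMS $\mathcal H=(M,n,\mathcal R)$ is $(M,n,\mathcal R')$ with $\mathcal R'(m)$ the (finite) set of vertices of $\mathcal R(m)$. A BMS $\mathcal H$ is safe if every instance of $\mathrm{Ext}(\mathcal H)$ is safe. *)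

theory Defs
  imports "HOL-Analysis.Analysis"
begin

text \<open>Modes are a finite nonempty set M of elements of type 'm; rates live in real^'n
  (n = CARD('n) \<ge> 1). A rate assignment is a function on modes (only values on M matter).\<close>

definition BMS :: "'m set \<Rightarrow> ('m \<Rightarrow> (real^'n) set) \<Rightarrow> bool" where
  "BMS M \<R> \<longleftrightarrow> finite M \<and> M \<noteq> {} \<and> (\<forall>m\<in>M. \<R> m \<noteq> {} \<and> polytope (\<R> m))"

definition cms_safe :: "'m set \<Rightarrow> ('m \<Rightarrow> real^'n) \<Rightarrow> bool" where
  "cms_safe M R \<longleftrightarrow> (\<exists>t :: 'm \<Rightarrow> real. (\<forall>m\<in>M. t m \<ge> 0) \<and> (\<Sum>m\<in>M. t m) = 1
       \<and> (\<Sum>m\<in>M. t m *\<^sub>R R m) = 0)"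

definition Ext :: "('m \<Rightarrow> (real^'n) set) \<Rightarrow> 'm \<Rightarrow> (real^'n) set" where
  "Ext \<R> m = {x. x extreme_point_of (\<R> m)}"

definition is_instance :: "'m set \<Rightarrow> ('m \<Rightarrow> (real^'n) set) \<Rightarrow> ('m \<Rightarrow> real^'n) \<Rightarrow> bool" where
  "is_instance M \<R> R \<longleftrightarrow> (\<forall>m\<in>M. R m \<in> \<R> m)"

definition bms_safe :: "'m set \<Rightarrow> ('m \<Rightarrow> (real^'n) set) \<Rightarrow> bool" where
  "bms_safe M \<R> \<longleftrightarrow> (\<forall>R. is_instance M (Ext \<R>) R \<longrightarrow> cms_safe M R)"

end

theory Submission
  imports Defs
begin

text \<open>A constant-rate system is safe iff \<open>0\<close> lies in the convex hull of its rates, and by the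
  separating hyperplane theorem this happens iff no direction \<open>v\<close> makes all rates strictly
  negative. A polytope is the convex hull of its vertices, so a direction that makes some rate
  of every mode negative also makes some vertex of every mode negative. Hence a failing direction
  for the BMS is exactly a failing direction for some instance of its extreme-rate system.\<close>

lemma cms_safe_iff_zero_in_convex_hull:
  assumes "finite M"
  shows "cms_safe M R \<longleftrightarrow> 0 \<in> convex hull (R ` M)"
proof -
  have "convex hull (R ` M) = convex hull (\<Union>m\<in>M. {R m})"
    by (simp add: UNION_singleton_eq_range)
  also have "\<dots> = {\<Sum>m\<in>M. t m *\<^sub>R r m | t r.
      (\<forall>m\<in>M. 0 \<le> t m) \<and> sum t M = 1 \<and> (\<forall>m\<in>M. r m \<in> {R m})}"
    using assms by (intro convex_hull_finite_union) auto
  finally have hull: "0 \<in> convex hull (R ` M) \<longleftrightarrow> (\<exists>t r. (\<forall>m\<in>M. 0 \<le> t m)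
      \<and> sum t M = 1 \<and> (\<forall>m\<in>M. r m = R m) \<and> (\<Sum>m\<in>M. t m *\<^sub>R r m) = 0)"
    by (smt (verit) mem_Collect_eq singleton_iff)
  have "(\<Sum>m\<in>M. t m *\<^sub>R r m) = (\<Sum>m\<in>M. t m *\<^sub>R R m)" if "\<forall>m\<in>M. r m = R m"
    for t :: "'a \<Rightarrow> real" and r
    using that by (auto intro: sum.cong)
  then show ?thesis
    unfolding cms_safe_def hull by metis
qed

lemma zero_in_convex_hull_iff_no_negative_direction:
  fixes S :: "'a::euclidean_space set"
  assumes "finite S"
  shows "0 \<in> convex hull S \<longleftrightarrow> (\<forall>v. \<exists>x\<in>S. 0 \<le> v \<bullet> x)"
proof
  assume "0 \<in> convex hull S"
  then obtain u where u0: "\<forall>x\<in>S. 0 \<le> u x" and u1: "sum u S = 1"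
    and u2: "(\<Sum>x\<in>S. u x *\<^sub>R x) = 0"
    using assms by (auto simp: convex_hull_finite)
  show "\<forall>v. \<exists>x\<in>S. 0 \<le> v \<bullet> x"
  proof (rule ccontr)
    assume "\<not> (\<forall>v. \<exists>x\<in>S. 0 \<le> v \<bullet> x)"
    then obtain v where neg: "\<And>x. x \<in> S \<Longrightarrow> v \<bullet> x < 0"
      by (auto simp: not_le)
    obtain x0 where x0: "x0 \<in> S" "u x0 > 0"
      using u0 u1 by (metis less_eq_real_def sum.neutral zero_neq_one)
    have "(\<Sum>x\<in>S. u x * (v \<bullet> x)) < (\<Sum>x\<in>S. 0)"
      using assms u0 neg x0
      by (intro sum_strict_mono_ex1) (auto intro!: mult_nonneg_nonpos bexI[of _ x0] mult_pos_neg
          simp: less_imp_le)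
    moreover have "(\<Sum>x\<in>S. u x * (v \<bullet> x)) = v \<bullet> (\<Sum>x\<in>S. u x *\<^sub>R x)"
      by (simp add: inner_sum_right)
    ultimately show False
      using u2 by simp
  qed
next
  assume all: "\<forall>v. \<exists>x\<in>S. 0 \<le> v \<bullet> x"
  show "0 \<in> convex hull S"
  proof (rule ccontr)
    assume "0 \<notin> convex hull S"
    moreover have "closed (convex hull S)"
      using assms by (simp add: compact_imp_closed finite_imp_compact_convex_hull)
    ultimately obtain a b where "0 < b" and sep: "\<forall>x\<in>convex hull S. a \<bullet> x > b"
      using separating_hyperplane_closed_0[OF convex_convex_hull] by blast
    obtain x where "x \<in> S" "0 \<le> (- a) \<bullet> x"
      using all by blast
    with \<open>0 < b\<close> sep show False
      by (auto dest!: bspec[of _ _ x] simp: hull_inc)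
  qed
qed

lemma cms_safe_iff_no_negative_direction:
  assumes "finite M"
  shows "cms_safe M R \<longleftrightarrow> (\<forall>v. \<exists>m\<in>M. 0 \<le> v \<bullet> R m)"
  using assms
  by (simp add: cms_safe_iff_zero_in_convex_hull zero_in_convex_hull_iff_no_negative_direction)

lemma extreme_point_in_open_halfspace:
  fixes P :: "'a::euclidean_space set"
  assumes "compact P" and "convex P" and "r \<in> P" and "v \<bullet> r < 0"
  obtains x where "x extreme_point_of P" and "v \<bullet> x < 0"
proof -
  have "P = convex hull {x. x extreme_point_of P}"
    using assms(1,2) by (simp add: Krein_Milman_Minkowski)
  moreover have "\<not> P \<subseteq> {x. 0 \<le> v \<bullet> x}"
    using assms(3,4) by auto
  ultimately have "\<not> {x. x extreme_point_of P} \<subseteq> {x. 0 \<le> v \<bullet> x}"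
    by (metis convex_halfspace_ge hull_minimal)
  then obtain x where "x extreme_point_of P" "\<not> 0 \<le> v \<bullet> x"
    by blast
  then show ?thesis
    using that by (simp add: not_le)
qed

theorem lemma2:
  fixes M :: "'m set" and \<R> :: "'m \<Rightarrow> (real^'n) set"
  assumes "BMS M \<R>"
  shows "(\<forall>v :: real^'n. \<exists>m\<in>M. \<forall>r\<in>\<R> m. v \<bullet> r \<ge> 0) \<longleftrightarrow> bms_safe M \<R>"
proof -
  have fin: "finite M" and poly: "\<And>m. m \<in> M \<Longrightarrow> polytope (\<R> m)"
    using assms unfolding BMS_def by auto
  have safe_iff: "bms_safe M \<R> \<longleftrightarrow> (\<forall>R. (\<forall>m\<in>M. R m extreme_point_of \<R> m)
      \<longrightarrow> (\<forall>v. \<exists>m\<in>M. 0 \<le> v \<bullet> R m))"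
    using fin by (simp add: bms_safe_def is_instance_def Ext_def cms_safe_iff_no_negative_direction)
  show ?thesis
    unfolding safe_iff
  proof (intro iffI allI impI)
    fix R and v :: "real^'n"
    assume H: "\<forall>v :: real^'n. \<exists>m\<in>M. \<forall>r\<in>\<R> m. v \<bullet> r \<ge> 0"
      and R: "\<forall>m\<in>M. R m extreme_point_of \<R> m"
    obtain m where "m \<in> M" "\<forall>r\<in>\<R> m. 0 \<le> v \<bullet> r"
      using H by blast
    moreover have "R m \<in> \<R> m"
      using R \<open>m \<in> M\<close> by (simp add: extreme_point_of_def)
    ultimately show "\<exists>m\<in>M. 0 \<le> v \<bullet> R m"
      by blast
  next
    fix v :: "real^'n"
    assume S: "\<forall>R. (\<forall>m\<in>M. R m extreme_point_of \<R> m) \<longrightarrow> (\<forall>v. \<exists>m\<in>M. 0 \<le> v \<bullet> R m)"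
    show "\<exists>m\<in>M. \<forall>r\<in>\<R> m. 0 \<le> v \<bullet> r"
    proof (rule ccontr)
      assume "\<not> ?thesis"
      then have "\<forall>m\<in>M. \<exists>x. x extreme_point_of \<R> m \<and> v \<bullet> x < 0"
        using poly polytope_imp_compact polytope_imp_convex
        by (metis not_le extreme_point_in_open_halfspace)
      then obtain R where R: "\<forall>m\<in>M. R m extreme_point_of \<R> m \<and> v \<bullet> R m < 0"
        by (rule bchoice[elim_format]) blast
      then obtain m where "m \<in> M" "0 \<le> v \<bullet> R m"
        using S by blast
      with R show False
        by (meson not_le)
    qed
  qed
qed

end
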